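(* Let $n\ge1$ and $I,J\subseteq[n-1]$, complements taken in $[n-1]$. Then (a) $L_{\mathrm{comp}(I)}=\sum_{J\subseteq[n-1]}(-1)^{|J\setminus I|}(\nu-1)^{|I\cap J|}\Pi(\nu)_{\mathrm{comp}(J)}$; (b) $\Pi(\nu)_{\mathrm{comp}(J)}=\sum_{I\subseteq[n-1]}\frac{1}{\nu^{n-1}}(-1)^{|J\setminus I|}(\nu-1)^{|(I\cup J)^c|}L_{\mathrm{comp}(I)}$.
   Context: Fix an integer $\nu>1$; $C_\nu$ is the additive cyclic group of order $\nu$; $Q_n(\nu)=\bigoplus_{i\in[n-1]}C_\nu$. $\psi_\nu(0)=1$, $\psi_\nu(g)=-1/(\nu-1)$ for $g\ne0$. For $I\subseteq[n-1]$, $\dot\chi^I(\nu)(\mathbf g)=\prod_{i\in[n-1]\setminus I}\psi_\nu(g_i)$, and $\kappa_I(\nu)$ is the indicator function of $\{\mathbf g\in Q_n(\nu):\{i:g_i\ne0\}=I\}$. $\mathrm{scf}(\mathcal N_n(\nu))$ is the span of the $\kappa_I(\nu)$, which also has basis $\{\dot\chi^I(\nu)\}$. $\mathrm{comp}(\{s_1<\dots<s_i\})=(s_1,s_2-s_1,\dots,n-s_i)$; $L_{\mathrm{comp}(I)}=\sum_{I\subseteq J\subseteq[n-1]}M_{\mathrm{comp}(J)}$ is the fundamental quasisymmetric function ($M$ the monomial ones). $\mathrm{ch}^n_\nu:\mathrm{scf}(\mathcal N_n(\nu))\to\mathsf{QSym}_n$ is the linear isomorphism $\dot\chi^I(\nu)\mapsto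 L_{\mathrm{comp}(I)}$, and $\Pi(\nu)_{\mathrm{comp}(I)}:=\mathrm{ch}^n_\nu\big(\kappa_I(\nu)/(\nu-1)^{|I|}\big)$. *)

theory Defs
  imports Complex_Main
begin

text \<open>The group Q_n(nu): tuples indexed by [n-1] = {1..<n} with entries in C_nu = {0..<nu}
  (represented as functions nat => nat, extended by 0 outside [n-1]).\<close>
definition Qn :: "nat \<Rightarrow> nat \<Rightarrow> (nat \<Rightarrow> nat) set" where
  "Qn nu n = {g. \<forall>i. (i \<in> {1..<n} \<longrightarrow> g i < nu) \<and> (i \<notin> {1..<n} \<longrightarrow> g i = 0)}"

definition psi :: "nat \<Rightarrow> nat \<Rightarrow> real" where
  "psi nu a = (if a = 0 then 1 else - 1 / (real nu - 1))"

definition chi :: "nat \<Rightarrow> nat \<Rightarrow> nat set \<Rightarrow> (nat \<Rightarrow> nat) \<Rightarrow> real" where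
  "chi nu n I g = (\<Prod>i\<in>{1..<n} - I. psi nu (g i))"

definition kappa :: "nat \<Rightarrow> nat set \<Rightarrow> (nat \<Rightarrow> nat) \<Rightarrow> real" where
  "kappa n I g = (if {i\<in>{1..<n}. g i \<noteq> 0} = I then 1 else 0)"

text \<open>comp({s_1<...<s_i}) = (s_1, s_2-s_1, ..., n-s_i) as a list.\<close>
definition comp :: "nat \<Rightarrow> nat set \<Rightarrow> nat list" where
  "comp n I = (let s = 0 # sorted_list_of_set I @ [n]
               in map (\<lambda>k. s ! (k+1) - s ! k) [0..<card I + 1])"

text \<open>QSym_n is modelled via coordinates in the monomial basis: an element is the
  coefficient function on compositions (nat list => real); M_alpha is the indicator of alpha.\<close>
definition Mon :: "nat list \<Rightarrow> nat list \<Rightarrow> real" where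
  "Mon alpha = (\<lambda>beta. if beta = alpha then 1 else 0)"

definition Lfun :: "nat \<Rightarrow> nat set \<Rightarrow> nat list \<Rightarrow> real" where
  "Lfun n I = (\<lambda>beta. \<Sum>J | I \<subseteq> J \<and> J \<subseteq> {1..<n}. Mon (comp n J) beta)"

definition chcoef :: "nat \<Rightarrow> nat \<Rightarrow> ((nat \<Rightarrow> nat) \<Rightarrow> real) \<Rightarrow> nat set \<Rightarrow> real" where
  "chcoef nu n f = (THE c. (\<forall>I. I \<notin> Pow {1..<n} \<longrightarrow> c I = 0) \<and>
      (\<forall>g\<in>Qn nu n. f g = (\<Sum>I\<in>Pow {1..<n}. c I * chi nu n I g)))"

text \<open>ch^n_nu: chi^I |-> L_comp(I), extended linearly.\<close>
definition ch :: "nat \<Rightarrow> nat \<Rightarrow> ((nat \<Rightarrow> nat) \<Rightarrow> real) \<Rightarrow> nat list \<Rightarrow> real" where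
  "ch nu n f = (\<lambda>beta. \<Sum>I\<in>Pow {1..<n}. chcoef nu n f I * Lfun n I beta)"

definition PiF :: "nat \<Rightarrow> nat \<Rightarrow> nat set \<Rightarrow> nat list \<Rightarrow> real" where
  "PiF nu n J = ch nu n (\<lambda>g. kappa n J g / (real nu - 1) ^ card J)"

end

theory Submission
  imports Defs
begin

text \<open>Every object involved factorises over the coordinates \<open>i \<in> [n-1]\<close>: \<open>\<chi>\<^sup>I\<close>, \<open>\<kappa>\<^sub>J\<close> and the
  coefficients in both formulas are products of one-coordinate factors. So the transition
  matrices between the bases \<open>\<chi>\<^sup>I\<close> and \<open>\<kappa>\<^sub>J / (\<nu>-1)\<^bsup>|J|\<^esup>\<close> are Kronecker powers of \<open>2\<times>2\<close>
  matrices, and inverting them reduces to inverting \<open>2\<times>2\<close> matrices. Since \<open>ch\<close> is linear,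
  (b) is the \<open>\<chi>\<close>-expansion of \<open>\<kappa>\<^sub>J / (\<nu>-1)\<^bsup>|J|\<^esup>\<close> transported by \<open>ch\<close>, and (a) is its inverse.
  That the \<open>\<chi>\<close>-coefficients defining \<open>ch\<close> are unique follows the same way: the values of
  the \<open>\<chi>\<^sup>I\<close> at the 0/1-points of \<open>Q\<^sub>n(\<nu>)\<close> again form a Kronecker power of an invertible
  \<open>2\<times>2\<close> matrix.\<close>

lemma sum_Pow_prod:
  fixes F :: "'a \<Rightarrow> bool \<Rightarrow> 'b::comm_semiring_1"
  assumes "finite A"
  shows "(\<Sum>T\<in>Pow A. \<Prod>i\<in>A. F i (i \<in> T)) = (\<Prod>i\<in>A. F i True + F i False)"
proof -
  have "(\<Prod>i\<in>A. F i (i \<in> T)) = (\<Prod>i\<in>T. F i True) * (\<Prod>i\<in>A - T. F i False)"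
    if "T \<subseteq> A" for T
  proof -
    have "(\<Prod>i\<in>A - T. F i (i \<in> T)) = (\<Prod>i\<in>A - T. F i False)"
      by (rule prod.cong) auto
    then show ?thesis
      unfolding prod.subset_diff[OF that assms] by (simp add: mult.commute cong: prod.cong)
  qed
  then show ?thesis
    unfolding prod_add[OF assms] by (intro sum.cong) auto
qed

lemma power_card_eq_prod:
  fixes c :: "'b::comm_monoid_mult"
  assumes "finite A"
  shows "c ^ card {i\<in>A. P i} = (\<Prod>i\<in>A. if P i then c else 1)"
  using prod.inter_filter[OF assms, of "\<lambda>_. c" P] by simp

lemma prod_of_bool:
  assumes "finite A"
  shows "(\<Prod>i\<in>A. of_bool (P i) :: 'b::comm_semiring_1) = of_bool (\<forall>i\<in>A. P i)"
  using assms by (induction rule: finite_induct) auto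

definition kron_power :: "'a set \<Rightarrow> (bool \<Rightarrow> bool \<Rightarrow> real) \<Rightarrow> 'a set \<Rightarrow> 'a set \<Rightarrow> real" where
  "kron_power A a I K = (\<Prod>i\<in>A. a (i \<in> I) (i \<in> K))"

lemma kron_power_mult:
  assumes "finite A"
  shows "(\<Sum>T\<in>Pow A. kron_power A a I T * kron_power A b T K)
    = kron_power A (\<lambda>x z. a x True * b True z + a x False * b False z) I K"
  unfolding kron_power_def prod.distrib[symmetric]
  using sum_Pow_prod[OF assms, of "\<lambda>i t. a (i \<in> I) t * b t (i \<in> K)"] by simp

lemma kron_power_inverse:
  assumes "finite A" "I \<subseteq> A" "K \<subseteq> A"
    and inverse: "\<And>x z. a x True * b True z + a x False * b False z = of_bool (x = z)"
  shows "(\<Sum>T\<in>Pow A. kron_power A a I T * kron_power A b T K) = of_bool (I = K)"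
proof -
  have "(\<forall>i\<in>A. (i \<in> I) = (i \<in> K)) \<longleftrightarrow> I = K"
    using assms(2,3) by blast
  then show ?thesis
    unfolding kron_power_mult[OF assms(1)] unfolding inverse kron_power_def prod_of_bool[OF assms(1)]
    by simp
qed

text \<open>One-coordinate factors, with \<open>x = (i \<in> I)\<close>, \<open>t = (i \<in> T)\<close> and \<open>j = (i \<in> J)\<close>:
  \<open>chi_at_indicator\<close> is the \<open>i\<close>-th factor of \<open>\<chi>\<^sup>I\<close> at the indicator point of \<open>T\<close>, and
  \<open>kappa_coeff nu j x\<close> that of the coefficient of \<open>\<chi>\<^sup>I\<close> in \<open>\<kappa>\<^sub>J / (\<nu>-1)\<^bsup>|J|\<^esup>\<close>.\<close>

definition chi_at_indicator :: "nat \<Rightarrow> bool \<Rightarrow> bool \<Rightarrow> real" where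
  "chi_at_indicator nu x t = (if x then 1 else psi nu (of_bool t))"

definition kappa_coeff :: "nat \<Rightarrow> bool \<Rightarrow> bool \<Rightarrow> real" where
  "kappa_coeff nu j x = (if x then 1 else if j then -1 else real nu - 1) / real nu"

definition chi_at_indicator_inv :: "nat \<Rightarrow> bool \<Rightarrow> bool \<Rightarrow> real" where
  "chi_at_indicator_inv nu t k = (if t then real nu - 1 else 1) * kappa_coeff nu t k"

definition kappa_coeff_inv :: "nat \<Rightarrow> bool \<Rightarrow> bool \<Rightarrow> real" where
  "kappa_coeff_inv nu x k = (if k then if x then real nu - 1 else -1 else 1)"

lemma chi_at_indicator_inverse:
  assumes "nu > 1"
  shows "chi_at_indicator nu x True * chi_at_indicator_inv nu True k
       + chi_at_indicator nu x False * chi_at_indicator_inv nu False k = of_bool (x = k)"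
  using assms
  by (cases x; cases k) (auto simp: chi_at_indicator_def chi_at_indicator_inv_def kappa_coeff_def
      psi_def field_simps)

lemma kappa_coeff_inverse:
  assumes "nu > 0"
  shows "kappa_coeff_inv nu x True * kappa_coeff nu True m
       + kappa_coeff_inv nu x False * kappa_coeff nu False m = of_bool (x = m)"
  using assms
  by (cases x; cases m) (auto simp: kappa_coeff_inv_def kappa_coeff_def field_simps)

lemma kappa_coeff_expansion:
  assumes "nu > 1"
  shows "kappa_coeff nu j True + kappa_coeff nu j False * psi nu a
       = of_bool ((a \<noteq> 0) = j) / (if j then real nu - 1 else 1)"
  using assms by (cases j) (auto simp: kappa_coeff_def psi_def field_simps)

lemma kron_power_kappa_coeff:
  assumes "finite A" "J \<subseteq> A"
  shows "kron_power A (kappa_coeff nu) J I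
       = 1 / real nu ^ card A * (-1) ^ card (J - I) * (real nu - 1) ^ card (A - (I \<union> J))"
proof -
  have sets: "{i\<in>A. i \<in> J \<and> i \<notin> I} = J - I"
    "{i\<in>A. i \<notin> I \<and> i \<notin> J} = A - (I \<union> J)"
    using assms(2) by auto
  have "kron_power A (kappa_coeff nu) J I = (\<Prod>i\<in>A. 1 / real nu
      * (if i \<in> J \<and> i \<notin> I then -1 else 1) * (if i \<notin> I \<and> i \<notin> J then real nu - 1 else 1))"
    unfolding kron_power_def by (intro prod.cong) (auto simp: kappa_coeff_def)
  also have "\<dots> = 1 / real nu ^ card A * (-1) ^ card {i\<in>A. i \<in> J \<and> i \<notin> I}
      * (real nu - 1) ^ card {i\<in>A. i \<notin> I \<and> i \<notin> J}"
    by (simp add: prod.distrib prod_dividef power_card_eq_prod[OF assms(1)])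
  finally show ?thesis
    unfolding sets .
qed

lemma kron_power_kappa_coeff_inv:
  assumes "finite A" "K \<subseteq> A"
  shows "kron_power A (kappa_coeff_inv nu) I K = (-1) ^ card (K - I) * (real nu - 1) ^ card (I \<inter> K)"
proof -
  have sets: "{i\<in>A. i \<in> K \<and> i \<notin> I} = K - I"
    "{i\<in>A. i \<in> I \<and> i \<in> K} = I \<inter> K"
    using assms(2) by auto
  have "kron_power A (kappa_coeff_inv nu) I K = (\<Prod>i\<in>A.
      (if i \<in> K \<and> i \<notin> I then -1 else 1) * (if i \<in> I \<and> i \<in> K then real nu - 1 else 1))"
    unfolding kron_power_def by (intro prod.cong) (auto simp: kappa_coeff_inv_def)
  also have "\<dots> = (-1) ^ card {i\<in>A. i \<in> K \<and> i \<notin> I} * (real nu - 1) ^ card {i\<in>A. i \<in> I \<and> i \<in> K}"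
    by (simp add: prod.distrib power_card_eq_prod[OF assms(1)])
  finally show ?thesis
    unfolding sets .
qed

lemma chi_eq_prod: "chi nu n I g = (\<Prod>i\<in>{1..<n}. if i \<in> I then 1 else psi nu (g i))"
  by (simp add: chi_def prod.If_cases Diff_eq)

lemma chi_at_indicator_point:
  "chi nu n I (\<lambda>i. of_bool (i \<in> T)) = kron_power {1..<n} (chi_at_indicator nu) I T"
  unfolding chi_eq_prod kron_power_def chi_at_indicator_def ..

lemma indicator_point_in_Qn:
  assumes "nu > 1" "T \<subseteq> {1..<n}"
  shows "(\<lambda>i. of_bool (i \<in> T)) \<in> Qn nu n"
  using assms unfolding Qn_def by auto

lemma chi_coeff_eq_sum_indicator_points:
  assumes nu: "nu > 1"
    and f: "\<forall>g\<in>Qn nu n. f g = (\<Sum>I\<in>Pow {1..<n}. c I * chi nu n I g)"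
    and K: "K \<subseteq> {1..<n}"
  shows "c K = (\<Sum>T\<in>Pow {1..<n}.
      f (\<lambda>i. of_bool (i \<in> T)) * kron_power {1..<n} (chi_at_indicator_inv nu) T K)"
proof -
  let ?A = "{1..<n}"
  have "(\<Sum>T\<in>Pow ?A. f (\<lambda>i. of_bool (i \<in> T)) * kron_power ?A (chi_at_indicator_inv nu) T K)
      = (\<Sum>T\<in>Pow ?A. \<Sum>I\<in>Pow ?A.
          c I * (kron_power ?A (chi_at_indicator nu) I T * kron_power ?A (chi_at_indicator_inv nu) T K))"
    using f indicator_point_in_Qn[OF nu]
    by (intro sum.cong) (auto simp: chi_at_indicator_point sum_distrib_right mult.assoc)
  also have "\<dots> = (\<Sum>I\<in>Pow ?A. c I * of_bool (I = K))"
    using K by (subst sum.swap)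
      (simp add: sum_distrib_left[symmetric] kron_power_inverse chi_at_indicator_inverse[OF nu])
  also have "\<dots> = c K"
    using K by simp
  finally show ?thesis ..
qed

lemma chcoef_eqI:
  assumes nu: "nu > 1"
    and c: "\<forall>I. I \<notin> Pow {1..<n} \<longrightarrow> c I = 0"
    and f: "\<forall>g\<in>Qn nu n. f g = (\<Sum>I\<in>Pow {1..<n}. c I * chi nu n I g)"
  shows "chcoef nu n f = c"
  unfolding chcoef_def
proof (rule the_equality)
  show "(\<forall>I. I \<notin> Pow {1..<n} \<longrightarrow> c I = 0)
      \<and> (\<forall>g\<in>Qn nu n. f g = (\<Sum>I\<in>Pow {1..<n}. c I * chi nu n I g))"
    using c f by blast
next
  fix d
  assume d: "(\<forall>I. I \<notin> Pow {1..<n} \<longrightarrow> d I = 0)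
      \<and> (\<forall>g\<in>Qn nu n. f g = (\<Sum>I\<in>Pow {1..<n}. d I * chi nu n I g))"
  show "d = c"
  proof
    fix K
    show "d K = c K"
      using c d chi_coeff_eq_sum_indicator_points[OF nu f]
        chi_coeff_eq_sum_indicator_points[OF nu, where f = f and c = d]
      by (cases "K \<in> Pow {1..<n}") auto
  qed
qed

lemma ch_eqI:
  assumes "nu > 1" and "\<forall>g\<in>Qn nu n. f g = (\<Sum>I\<in>Pow {1..<n}. c I * chi nu n I g)"
  shows "ch nu n f = (\<lambda>beta. \<Sum>I\<in>Pow {1..<n}. c I * Lfun n I beta)"
proof -
  have "chcoef nu n f = (\<lambda>I. if I \<in> Pow {1..<n} then c I else 0)"
    using assms by (intro chcoef_eqI) (auto intro!: sum.cong)
  then show ?thesis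
    unfolding ch_def by (auto intro!: sum.cong)
qed

lemma kappa_eq_prod:
  assumes "J \<subseteq> {1..<n}"
  shows "kappa n J g = (\<Prod>i\<in>{1..<n}. of_bool ((g i \<noteq> 0) = (i \<in> J)))"
  using assms unfolding kappa_def prod_of_bool[OF finite_atLeastLessThan] by auto

lemma kappa_normalized_eq_sum_chi:
  assumes nu: "nu > 1" and J: "J \<subseteq> {1..<n}"
  shows "kappa n J g / (real nu - 1) ^ card J
       = (\<Sum>I\<in>Pow {1..<n}. kron_power {1..<n} (kappa_coeff nu) J I * chi nu n I g)"
proof -
  let ?A = "{1..<n}"
  have "{i\<in>?A. i \<in> J} = J"
    using J by auto
  then have "(real nu - 1) ^ card J = (\<Prod>i\<in>?A. if i \<in> J then real nu - 1 else 1)"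
    using power_card_eq_prod[of ?A "real nu - 1" "\<lambda>i. i \<in> J"] by simp
  then have "kappa n J g / (real nu - 1) ^ card J
      = (\<Prod>i\<in>?A. of_bool ((g i \<noteq> 0) = (i \<in> J)) / (if i \<in> J then real nu - 1 else 1))"
    unfolding kappa_eq_prod[OF J] prod_dividef by simp
  also have "\<dots> = (\<Prod>i\<in>?A. kappa_coeff nu (i \<in> J) True + kappa_coeff nu (i \<in> J) False * psi nu (g i))"
    by (simp add: kappa_coeff_expansion[OF nu])
  also have "\<dots> = (\<Sum>I\<in>Pow ?A. \<Prod>i\<in>?A.
      kappa_coeff nu (i \<in> J) (i \<in> I) * (if i \<in> I then 1 else psi nu (g i)))"
    using sum_Pow_prod[of ?A "\<lambda>i t. kappa_coeff nu (i \<in> J) t * (if t then 1 else psi nu (g i))"]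
    by simp
  also have "\<dots> = (\<Sum>I\<in>Pow ?A. kron_power ?A (kappa_coeff nu) J I * chi nu n I g)"
    by (simp add: prod.distrib kron_power_def chi_eq_prod)
  finally show ?thesis .
qed

lemma PiF_eq_sum_Lfun:
  assumes "nu > 1" and "J \<subseteq> {1..<n}"
  shows "PiF nu n J = (\<lambda>beta. \<Sum>I\<in>Pow {1..<n}. kron_power {1..<n} (kappa_coeff nu) J I * Lfun n I beta)"
  unfolding PiF_def using assms by (intro ch_eqI) (simp_all add: kappa_normalized_eq_sum_chi)

lemma Lfun_eq_sum_PiF:
  assumes nu: "nu > 1" and I: "I \<subseteq> {1..<n}"
  shows "Lfun n I = (\<lambda>beta. \<Sum>K\<in>Pow {1..<n}. kron_power {1..<n} (kappa_coeff_inv nu) I K * PiF nu n K beta)"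
proof
  fix beta
  let ?A = "{1..<n}"
  have "(\<Sum>K\<in>Pow ?A. kron_power ?A (kappa_coeff_inv nu) I K * PiF nu n K beta)
      = (\<Sum>K\<in>Pow ?A. \<Sum>M\<in>Pow ?A.
          kron_power ?A (kappa_coeff_inv nu) I K * kron_power ?A (kappa_coeff nu) K M * Lfun n M beta)"
    by (intro sum.cong) (auto simp: PiF_eq_sum_Lfun[OF nu] sum_distrib_left mult.assoc)
  also have "\<dots> = (\<Sum>M\<in>Pow ?A. of_bool (I = M) * Lfun n M beta)"
    using I nu by (subst sum.swap)
      (simp add: sum_distrib_right[symmetric] kron_power_inverse kappa_coeff_inverse)
  also have "\<dots> = Lfun n I beta"
    using I by simp
  finally show "Lfun n I beta = (\<Sum>K\<in>Pow ?A. kron_power ?A (kappa_coeff_inv nu) I K * PiF nu n K beta)" ..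
qed

theorem lemma4p3:
  fixes nu n :: nat and I J :: "nat set"
  assumes "nu > 1" and "n \<ge> 1" and "I \<subseteq> {1..<n}" and "J \<subseteq> {1..<n}"
  shows "(Lfun n I = (\<lambda>beta. \<Sum>K\<in>Pow {1..<n}.
            (-1) ^ card (K - I) * (real nu - 1) ^ card (I \<inter> K) * PiF nu n K beta)) \<and>
         (PiF nu n J = (\<lambda>beta. \<Sum>K\<in>Pow {1..<n}.
            1 / real nu ^ (n - 1) * (-1) ^ card (J - K) * (real nu - 1) ^ card ({1..<n} - (K \<union> J))
            * Lfun n K beta))"
proof
  show "Lfun n I = (\<lambda>beta. \<Sum>K\<in>Pow {1..<n}.
      (-1) ^ card (K - I) * (real nu - 1) ^ card (I \<inter> K) * PiF nu n K beta)"
    unfolding Lfun_eq_sum_PiF[OF assms(1,3)] by (auto intro!: sum.cong simp: kron_power_kappa_coeff_inv)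
  show "PiF nu n J = (\<lambda>beta. \<Sum>K\<in>Pow {1..<n}.
      1 / real nu ^ (n - 1) * (-1) ^ card (J - K) * (real nu - 1) ^ card ({1..<n} - (K \<union> J))
      * Lfun n K beta)"
    unfolding PiF_eq_sum_Lfun[OF assms(1,4)] kron_power_kappa_coeff[OF finite_atLeastLessThan assms(4)]
    by simp
qed

end
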